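(* Let $n\ge3$ and $L>1$, and define $$\sigma_{1,2}=\frac{(L+n-1)+L^n(1+L(n-1))+\sqrt{\left((L+n-1)+L^n(1+L(n-1))\right)^2-4L(L^n-1)^2(n-1)}}{2L(L^n-1)},$$ $$\sigma_{2,1}=\frac{L^{n+2}(2+Ln)+(n+2L)-\sqrt{\left(L^{n+2}(2+Ln)+(n+2L)\right)^2-8Ln(L^{n+2}-1)^2}}{2L(L^{n+2}-1)}.$$ Then $\sigma_{2,1}\le\sigma_{1,2}$. *)

theory Defs
  imports Complex_Main
begin

end

theory Submission imports Defs begin

text \<open>
  Put \<open>x = L^n\<close>, \<open>y = L^(n+2)\<close>, and let \<open>A\<close>, \<open>B\<close> be the terms before the square roots.
  Then \<open>\<sigma>\<^sub>2\<^sub>,\<^sub>1\<close> is the smaller root of \<open>L(y-1)s\<^sup>2 - Bs + 2n(y-1)\<close>, so rationalising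
  gives \<open>\<sigma>\<^sub>2\<^sub>,\<^sub>1 \<le> 4n(y-1)/B\<close>; and \<open>\<sigma>\<^sub>1\<^sub>,\<^sub>2 \<ge> A/(2L(x-1))\<close> because both discriminants are
  nonnegative by \<open>(a+b)\<^sup>2 \<ge> 4ab\<close>. It remains to show \<open>8nL(x-1)(y-1) \<le> AB\<close>. For \<open>n \<ge> 6\<close> this
  holds for all \<open>x, y \<ge> 1\<close>, comparing the coefficients of \<open>(x-1)(y-1)\<close>; for \<open>n = 3, 4, 5\<close>
  it is a polynomial inequality in \<open>L\<close>, checked by expanding in \<open>L - 1\<close>.
\<close>

lemma four_mul_le_sq_of_scaled_sum:
  fixes a b z w :: real
  assumes "0 \<le> a" "0 \<le> b" "1 \<le> z" "z * (a + b) \<le> w"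
  shows "4 * a * b * (z - 1)^2 \<le> w^2"
proof -
  have "4 * a * b \<le> (a + b)^2"
    using sum_squares_ge_zero[of "a - b" 0] by (simp add: power2_eq_square algebra_simps)
  moreover have "(z - 1)^2 \<le> z^2"
    using assms(3) by (intro power_mono) auto
  ultimately have "4 * a * b * (z - 1)^2 \<le> (z * (a + b))^2"
    using assms(1,2) by (simp add: power_mult_distrib mult_mono' mult.commute)
  also have "\<dots> \<le> w^2"
    using assms by (intro power_mono) auto
  finally show ?thesis .
qed

lemma diff_sqrt_diff_le_divide:
  fixes B D :: real
  assumes "0 < B" "0 \<le> D" "D \<le> B^2"
  shows "B - sqrt (B^2 - D) \<le> D / B"
proof -
  define S where "S = sqrt (B^2 - D)"
  have "0 \<le> S" and "S^2 = B^2 - D"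
    using assms(3) by (simp_all add: S_def)
  moreover have "S \<le> B"
    using assms real_sqrt_le_mono[of "B^2 - D" "B^2"] by (simp add: S_def)
  ultimately have "(B - S) * B \<le> D"
    using mult_left_mono[of B "B + S" "B - S"] by (simp add: algebra_simps power2_eq_square)
  then show ?thesis
    using assms(1) by (simp add: S_def le_divide_eq)
qed

lemma smaller_root_le_larger_root:
  fixes L N x y A B :: real
  assumes L: "0 < L" and N: "1 \<le> N" and x: "1 < x" and y: "1 < y"
    and A: "x * (1 + L * (N - 1)) \<le> A" and B: "y * (2 + L * N) \<le> B"
    and AB: "8 * N * L * (x - 1) * (y - 1) \<le> A * B"
  shows "(B - sqrt (B^2 - 8 * L * N * (y - 1)^2)) / (2 * L * (y - 1))
       \<le> (A + sqrt (A^2 - 4 * L * (x - 1)^2 * (N - 1))) / (2 * L * (x - 1))"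
proof -
  have B_pos: "0 < B"
  proof -
    have "0 < y * (2 + L * N)"
      using L N y by (simp add: add_pos_nonneg)
    then show ?thesis
      using B by linarith
  qed
  have disc_B: "8 * L * N * (y - 1)^2 \<le> B^2"
    using four_mul_le_sq_of_scaled_sum[of 2 "L * N" y B] L N y B by (simp add: mult.assoc)
  have disc_A: "4 * L * (x - 1)^2 * (N - 1) \<le> A^2"
    using four_mul_le_sq_of_scaled_sum[of 1 "L * (N - 1)" x A] L N x A by (simp add: algebra_simps)
  have "(B - sqrt (B^2 - 8 * L * N * (y - 1)^2)) / (2 * L * (y - 1))
      \<le> 8 * L * N * (y - 1)^2 / B / (2 * L * (y - 1))"
    using diff_sqrt_diff_le_divide[OF B_pos _ disc_B] L N y by (intro divide_right_mono) auto
  also have "\<dots> = 4 * N * (y - 1) / B"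
    using B_pos L y by (simp add: power2_eq_square field_simps)
  also have "\<dots> \<le> A / (2 * L * (x - 1))"
  proof -
    have "4 * N * (y - 1) * (2 * L * (x - 1)) \<le> A * B"
      using AB by (simp add: algebra_simps)
    then show ?thesis
      using B_pos L x by (simp add: divide_le_eq le_divide_eq mult.commute)
  qed
  also have "\<dots> \<le> (A + sqrt (A^2 - 4 * L * (x - 1)^2 * (N - 1))) / (2 * L * (x - 1))"
    using disc_A L x by (intro divide_right_mono) auto
  finally show ?thesis .
qed

lemma coefficient_product_bound_of_six_le:
  fixes N L x y :: real
  assumes N: "6 \<le> N" and L: "1 \<le> L" and x: "1 \<le> x" and y: "1 \<le> y"
  shows "8 * N * L * (x - 1) * (y - 1)
       \<le> (L + N - 1 + x * (1 + L * (N - 1))) * (y * (2 + L * N) + (N + 2 * L))"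
proof -
  define c where "c = 1 + L * (N - 1)"
  define b where "b = 2 + L * N"
  have "c * b - 8 * N * L = (L - 1) * (N * (N - 1) * L - 2) + L * (N * (N - 6))"
    by (simp add: c_def b_def algebra_simps)
  moreover have "2 \<le> N * (N - 1) * L"
    using N L mult_mono[of 6 N 5 "N - 1"] mult_mono[of 30 "N * (N - 1)" 1 L] by linarith
  ultimately have cb: "8 * N * L \<le> c * b"
    using N L by (smt (verit) mult_nonneg_nonneg)
  have "8 * N * L * ((x - 1) * (y - 1)) \<le> c * b * ((x - 1) * (y - 1))"
    using cb x y by (intro mult_right_mono) auto
  also have "\<dots> = (c * (x - 1)) * (b * (y - 1))"
    by (simp add: ac_simps)
  also have "\<dots> \<le> (L + N - 1 + c + c * (x - 1)) * (N + 2 * L + b + b * (y - 1))"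
    using N L x y by (intro mult_mono) (auto simp: c_def b_def)
  finally show ?thesis
    by (simp add: c_def b_def algebra_simps)
qed

lemma coefficient_product_bound_3:
  fixes L :: real
  assumes "1 \<le> L"
  shows "8 * 3 * L * (L^3 - 1) * (L^5 - 1)
       \<le> (L + 3 - 1 + L^3 * (1 + L * (3 - 1))) * (L^5 * (2 + L * 3) + (3 + 2 * L))"
proof -
  define t where "t = L - 1"
  have t: "0 \<le> t" and L: "L = 1 + t"
    using assms by (simp_all add: t_def)
  define q where "q = 540 + 360*t - 85*t^2 - 255*t^3 - 59*t^4 + 127*t^5 + 119*t^6 + 43*t^7 + 6*t^8"
  have expansion: "(L + 3 - 1 + L^3 * (1 + L * (3 - 1))) * (L^5 * (2 + L * 3) + (3 + 2 * L))
      - 8 * 3 * L * (L^3 - 1) * (L^5 - 1) = 60 + 300*t + t^2 * q"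
    unfolding L q_def by (simp add: algebra_simps power2_eq_square power3_eq_cube power_numeral_reduce)
  have "0 \<le> q"
  proof (cases "t \<le> 1")
    case True
    then have "t^2 \<le> 1" "t^3 \<le> 1" "t^4 \<le> 1"
      using t by (auto intro: power_le_one)
    then show ?thesis
      using t by (simp add: q_def)
  next
    case False
    \<comment> \<open>for \<open>t \<ge> 1\<close> re-expand around \<open>1\<close>, where all coefficients are positive\<close>
    define s where "s = t - 1"
    have "q = 796 + 887*s + 2922*s^2 + 5000*s^3 + 4286*s^4 + 2080*s^5 + 588*s^6 + 91*s^7 + 6*s^8"
      unfolding q_def s_def by (simp add: algebra_simps power2_eq_square power3_eq_cube power_numeral_reduce)
    then show ?thesis
      using False by (simp add: s_def)
  qed
  then show ?thesis
    using expansion t by (smt (verit) mult_nonneg_nonneg zero_le_power2)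
qed

lemma coefficient_product_bound_4:
  fixes L :: real
  assumes "1 \<le> L"
  shows "8 * 4 * L * (L^4 - 1) * (L^6 - 1)
       \<le> (L + 4 - 1 + L^4 * (1 + L * (4 - 1))) * (L^6 * (2 + L * 4) + (4 + 2 * L))"
proof -
  define t where "t = L - 1"
  have t: "0 \<le> t" and L: "L = 1 + t"
    using assms by (simp_all add: t_def)
  have "(L + 4 - 1 + L^4 * (1 + L * (4 - 1))) * (L^6 * (2 + L * 4) + (4 + 2 * L))
      - 8 * 4 * L * (L^4 - 1) * (L^6 - 1)
      = 96 + 576*t + 1416*t^2 + 1800*t^3 + 1404*t^4 + 1152*t^5 + 1790*t^6 + 2562*t^7
        + 2404*t^8 + 1450*t^9 + 552*t^10 + 122*t^11 + 12*t^12"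
    unfolding L by (simp add: algebra_simps power2_eq_square power3_eq_cube power_numeral_reduce)
  moreover have "0 \<le> 96 + 576*t + 1416*t^2 + 1800*t^3 + 1404*t^4 + 1152*t^5 + 1790*t^6 + 2562*t^7
        + 2404*t^8 + 1450*t^9 + 552*t^10 + 122*t^11 + 12*t^12"
    using t by simp
  ultimately show ?thesis
    by linarith
qed

lemma coefficient_product_bound_5:
  fixes L :: real
  assumes "1 \<le> L"
  shows "8 * 5 * L * (L^5 - 1) * (L^7 - 1)
       \<le> (L + 5 - 1 + L^5 * (1 + L * (5 - 1))) * (L^7 * (2 + L * 5) + (5 + 2 * L))"
proof -
  define t where "t = L - 1"
  have t: "0 \<le> t" and L: "L = 1 + t"
    using assms by (simp_all add: t_def)
  have "(L + 5 - 1 + L^5 * (1 + L * (5 - 1))) * (L^7 * (2 + L * 5) + (5 + 2 * L))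
      - 8 * 5 * L * (L^5 - 1) * (L^7 - 1)
      = 140 + 980*t + 3080*t^2 + 5740*t^3 + 8190*t^4 + 11690*t^5 + 17906*t^6 + 24584*t^7
        + 26408*t^8 + 21180*t^9 + 12430*t^10 + 5198*t^11 + 1471*t^12 + 253*t^13 + 20*t^14"
    unfolding L by (simp add: algebra_simps power2_eq_square power3_eq_cube power_numeral_reduce)
  moreover have "0 \<le> 140 + 980*t + 3080*t^2 + 5740*t^3 + 8190*t^4 + 11690*t^5 + 17906*t^6
        + 24584*t^7 + 26408*t^8 + 21180*t^9 + 12430*t^10 + 5198*t^11 + 1471*t^12 + 253*t^13 + 20*t^14"
    using t by simp
  ultimately show ?thesis
    by linarith
qed

lemma coefficient_product_bound:
  fixes n :: nat and L :: real
  assumes n: "3 \<le> n" and L: "1 \<le> L"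
  shows "8 * real n * L * (L^n - 1) * (L^(n+2) - 1)
       \<le> (L + real n - 1 + L^n * (1 + L * (real n - 1))) * (L^(n+2) * (2 + L * real n) + (real n + 2 * L))"
proof -
  consider "n = 3" | "n = 4" | "n = 5" | "6 \<le> n"
    using n by linarith
  then show ?thesis
  proof cases
    case 4
    moreover have "1 \<le> L^n" "1 \<le> L^(n+2)"
      using L by (simp_all only: one_le_power)
    ultimately show ?thesis
      using coefficient_product_bound_of_six_le[of "real n" L "L^n" "L^(n+2)"] L by simp
  qed (use coefficient_product_bound_3 coefficient_product_bound_4 coefficient_product_bound_5 L in simp_all)
qed

theorem lemma2p5:
  fixes n :: nat and L :: real
  assumes "n \<ge> 3" and "L > 1"
  shows "(L^(n+2) * (2 + L * real n) + (real n + 2 * L)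
           - sqrt ((L^(n+2) * (2 + L * real n) + (real n + 2 * L))^2
                   - 8 * L * real n * (L^(n+2) - 1)^2))
         / (2 * L * (L^(n+2) - 1))
       \<le> ((L + real n - 1) + L^n * (1 + L * (real n - 1))
           + sqrt (((L + real n - 1) + L^n * (1 + L * (real n - 1)))^2
                   - 4 * L * (L^n - 1)^2 * (real n - 1)))
         / (2 * L * (L^n - 1))"
proof (rule smaller_root_le_larger_root)
  show "1 < L^n" "1 < L^(n+2)"
    using assms one_less_power[of L n] one_less_power[of L "n+2"] by simp_all
  show "L^n * (1 + L * (real n - 1)) \<le> L + real n - 1 + L^n * (1 + L * (real n - 1))"
    "L^(n+2) * (2 + L * real n) \<le> L^(n+2) * (2 + L * real n) + (real n + 2 * L)"
    using assms by simp_all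
  show "8 * real n * L * (L^n - 1) * (L^(n+2) - 1)
      \<le> (L + real n - 1 + L^n * (1 + L * (real n - 1))) * (L^(n+2) * (2 + L * real n) + (real n + 2 * L))"
    using coefficient_product_bound assms by simp
qed (use assms in simp_all)

end
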